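(* Let $G$ be a finite directed acyclic graph whose input nodes (the nodes with no incoming edge) are the $d$ coordinates of a vector $\bm x$, and let $o$ be a leaf node of $G$. For an input node $x$, let $\mathcal P(x,o)$ be the set of directed paths from $x$ to $o$; for a path ${\bm p}$ let $\tilde{\bm p}$ be the path without its starting node, and $d_p$ the in-degree of node $p$. Assume the symmetry assumption (S): all input nodes $x$ have the same multiset $\{d_{\bm p}\}_{{\bm p}\in\mathcal P(x,o)}$ of path-degrees, where the path-degree $d_{\bm p}$ of ${\bm p}$ is the multiset $\{d_p: p\in\tilde{\bm p}\}$. Then for every input node $x$, $$\sum_{{\bm p}\in\mathcal P(x,o)}\prod_{p\in\tilde{\bm p}}\frac1{d_p}=\frac1d.$$ *)

theory Defs
  imports Complex_Main "HOL-Library.Multiset"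
begin

definition in_degree :: "('a \<times> 'a) set \<Rightarrow> 'a \<Rightarrow> nat" where
  "in_degree E v = card {u. (u, v) \<in> E}"

definition input_nodes :: "'a set \<Rightarrow> ('a \<times> 'a) set \<Rightarrow> 'a set" where
  "input_nodes V E = {v \<in> V. \<forall>u. (u, v) \<notin> E}"

definition is_leaf :: "'a set \<Rightarrow> ('a \<times> 'a) set \<Rightarrow> 'a \<Rightarrow> bool" where
  "is_leaf V E v \<longleftrightarrow> v \<in> V \<and> (\<forall>w. (v, w) \<notin> E)"

definition dpaths :: "('a \<times> 'a) set \<Rightarrow> 'a \<Rightarrow> 'a \<Rightarrow> 'a list set" where
  "dpaths E x t = {ps. ps \<noteq> [] \<and> hd ps = x \<and> last ps = t \<and> successively (\<lambda>u v. (u, v) \<in> E) ps}"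

definition path_degree :: "('a \<times> 'a) set \<Rightarrow> 'a list \<Rightarrow> nat multiset" where
  "path_degree E ps = mset (map (in_degree E) (tl ps))"

definition path_degrees :: "('a \<times> 'a) set \<Rightarrow> 'a \<Rightarrow> 'a \<Rightarrow> nat multiset multiset" where
  "path_degrees E x t = image_mset (path_degree E) (mset_set (dpaths E x t))"

end

theory Submission
  imports Defs
begin

text \<open>Give a path the weight \<open>\<Prod>1/d\<^sub>p\<close> over its nodes after the start. Every non-input node
  averages the weights arriving along its in-edges, so by well-founded induction along the
  acyclic edge relation the total weight of all paths from all input nodes to any node is 1.
  The weight of a path is determined by its path-degree, so under the symmetry assumption
  every input node contributes the same amount, namely \<open>1/d\<close>.\<close>

lemma successively_imp_trancl:
  assumes "successively (\<lambda>u v. (u, v) \<in> E) (a # ps)" "v \<in> set ps"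
  shows "(a, v) \<in> E\<^sup>+"
  using assms
proof (induction ps arbitrary: a)
  case (Cons b ps)
  then have "(a, b) \<in> E" and "successively (\<lambda>u v. (u, v) \<in> E) (b # ps)" by auto
  with Cons show ?case by (cases "v = b") (auto intro: trancl_into_trancl2)
qed simp

lemma successively_acyclic_imp_distinct:
  "acyclic E \<Longrightarrow> successively (\<lambda>u v. (u, v) \<in> E) ps \<Longrightarrow> distinct ps"
proof (induction ps)
  case (Cons a ps)
  have "a \<notin> set ps"
    using successively_imp_trancl[OF Cons.prems(2)] Cons.prems(1) by (auto simp: acyclic_def)
  moreover have "successively (\<lambda>u v. (u, v) \<in> E) ps"
    using Cons.prems(2) by (auto simp: successively_Cons)
  ultimately show ?case using Cons by simp
qed simp

lemma finite_dpaths: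
  assumes "finite E" "acyclic E"
  shows "finite (dpaths E x t)"
proof (rule finite_subset)
  let ?W = "insert x (snd ` E)"
  show "dpaths E x t \<subseteq> {xs. set xs \<subseteq> ?W \<and> length xs \<le> card ?W}"
  proof
    fix ps assume "ps \<in> dpaths E x t"
    then obtain rest where ps: "ps = x # rest" and path: "successively (\<lambda>u v. (u, v) \<in> E) ps"
      by (cases ps) (auto simp: dpaths_def)
    have "set ps \<subseteq> ?W"
    proof
      fix v assume "v \<in> set ps"
      moreover have "v \<in> snd ` E" if "v \<in> set rest"
      proof -
        have "(x, v) \<in> E\<^sup>+" using successively_imp_trancl path ps that by metis
        then obtain u where "(u, v) \<in> E" by (meson tranclE)
        then show ?thesis by (auto intro: rev_image_eqI)
      qed
      ultimately show "v \<in> ?W" using ps by auto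
    qed
    moreover have "length ps = card (set ps)"
      using successively_acyclic_imp_distinct[OF assms(2) path] by (simp add: distinct_card)
    ultimately show "ps \<in> {xs. set xs \<subseteq> ?W \<and> length xs \<le> card ?W}"
      using assms(1) by (simp add: card_mono)
  qed
  show "finite {xs. set xs \<subseteq> ?W \<and> length xs \<le> card ?W}"
    using assms(1) by (simp add: finite_lists_length_le)
qed

lemma dpaths_refl:
  assumes "acyclic E"
  shows "dpaths E v v = {[v]}"
proof
  show "dpaths E v v \<subseteq> {[v]}"
  proof
    fix ps assume "ps \<in> dpaths E v v"
    then obtain rest where ps: "ps = v # rest" and "last ps = v"
      and path: "successively (\<lambda>u v. (u, v) \<in> E) ps"
      by (cases ps) (auto simp: dpaths_def)
    have "rest = []"
    proof (rule ccontr)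
      assume "rest \<noteq> []"
      then have "v \<in> set rest" using \<open>last ps = v\<close> ps by (metis last_ConsR last_in_set)
      then have "(v, v) \<in> E\<^sup>+" using successively_imp_trancl path ps by metis
      then show False using assms by (simp add: acyclic_def)
    qed
    then show "ps \<in> {[v]}" using ps by simp
  qed
qed (simp add: dpaths_def)

lemma dpaths_snoc:
  assumes "y \<noteq> v"
  shows "dpaths E y v = (\<lambda>ps. ps @ [v]) ` (\<Union>u \<in> {u. (u, v) \<in> E}. dpaths E y u)"
proof
  show "dpaths E y v \<subseteq> (\<lambda>ps. ps @ [v]) ` (\<Union>u \<in> {u. (u, v) \<in> E}. dpaths E y u)"
  proof
    fix ps assume "ps \<in> dpaths E y v"
    then have ne: "ps \<noteq> []" and hd: "hd ps = y" and "last ps = v"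
      and path: "successively (\<lambda>u v. (u, v) \<in> E) ps"
      by (auto simp: dpaths_def)
    obtain qs where ps: "ps = qs @ [v]"
      using ne \<open>last ps = v\<close> by (metis append_butlast_last_id)
    have "qs \<noteq> []" using ps hd assms by auto
    then have "qs \<in> dpaths E y (last qs)" and "(last qs, v) \<in> E"
      using hd path ps by (auto simp: dpaths_def successively_append_iff)
    then show "ps \<in> (\<lambda>ps. ps @ [v]) ` (\<Union>u \<in> {u. (u, v) \<in> E}. dpaths E y u)"
      using ps by blast
  qed
qed (auto simp: dpaths_def successively_append_iff)

lemma finite_predecessors: "finite E \<Longrightarrow> finite {u. (u, v) \<in> E}"
  by (rule finite_subset[of _ "fst ` E"]) (auto intro: rev_image_eqI)

definition path_weight :: "('a \<times> 'a) set \<Rightarrow> 'a list \<Rightarrow> real" where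
  "path_weight E ps = (\<Prod>p \<leftarrow> tl ps. 1 / real (in_degree E p))"

lemma path_weight_snoc:
  "ps \<noteq> [] \<Longrightarrow> path_weight E (ps @ [v]) = path_weight E ps / real (in_degree E v)"
  by (cases ps) (auto simp: path_weight_def)

lemma path_weight_eq_prod_path_degree:
  "path_weight E ps = (\<Prod>k \<in># path_degree E ps. 1 / real k)"
  unfolding path_weight_def path_degree_def
  by (simp add: prod_mset_prod_list[symmetric] mset_map multiset.map_comp comp_def)

lemma sum_path_weight_eq_path_degrees:
  "(\<Sum>ps \<in> dpaths E y t. path_weight E ps) = (\<Sum>M \<in># path_degrees E y t. \<Prod>k \<in># M. 1 / real k)"
  unfolding path_degrees_def
  by (simp add: sum_unfold_sum_mset path_weight_eq_prod_path_degree multiset.map_comp comp_def)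

lemma sum_path_weight_snoc:
  assumes "finite E" "acyclic E" "y \<noteq> v"
  shows "(\<Sum>ps \<in> dpaths E y v. path_weight E ps) =
         (\<Sum>u \<in> {u. (u, v) \<in> E}. \<Sum>ps \<in> dpaths E y u. path_weight E ps) / real (in_degree E v)"
proof -
  let ?P = "{u. (u, v) \<in> E}"
  have "inj_on (\<lambda>ps. ps @ [v]) (\<Union>u \<in> ?P. dpaths E y u)" by (auto intro: inj_onI)
  then have "(\<Sum>ps \<in> dpaths E y v. path_weight E ps)
      = (\<Sum>ps \<in> (\<Union>u \<in> ?P. dpaths E y u). path_weight E (ps @ [v]))"
    unfolding dpaths_snoc[OF assms(3)] by (simp add: sum.reindex)
  also have "\<dots> = (\<Sum>u \<in> ?P. \<Sum>ps \<in> dpaths E y u. path_weight E (ps @ [v]))"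
    by (rule sum.UNION_disjoint)
      (simp_all add: finite_predecessors finite_dpaths assms, fastforce simp: dpaths_def)
  also have "\<dots> = (\<Sum>u \<in> ?P. \<Sum>ps \<in> dpaths E y u. path_weight E ps / real (in_degree E v))"
    by (intro sum.cong refl) (auto simp: path_weight_snoc dpaths_def)
  finally show ?thesis by (simp add: sum_divide_distrib)
qed

lemma sum_inputs_path_weight_eq_1:
  assumes "finite V" "E \<subseteq> V \<times> V" "acyclic E" "v \<in> V"
  shows "(\<Sum>y \<in> input_nodes V E. \<Sum>ps \<in> dpaths E y v. path_weight E ps) = 1"
proof -
  let ?I = "input_nodes V E"
  have "finite E" using assms(1,2) by (meson finite_SigmaI finite_subset)
  then have "wf E" using assms(3) by (rule finite_acyclic_wf)
  then show ?thesis using \<open>v \<in> V\<close>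
  proof (induction v)
    case (less v)
    let ?P = "{u. (u, v) \<in> E}"
    have "finite ?I" using assms(1) by (simp add: input_nodes_def)
    show ?case
    proof (cases "v \<in> ?I")
      case True
      then have "?P = {}" by (auto simp: input_nodes_def)
      then have "(\<Sum>ps \<in> dpaths E y v. path_weight E ps) = (if y = v then 1 else 0)" for y
        using dpaths_refl[OF assms(3)] dpaths_snoc[of y v E] by (simp add: path_weight_def)
      then show ?thesis using True \<open>finite ?I\<close> by simp
    next
      case False
      then have "?P \<noteq> {}" using less.prems by (auto simp: input_nodes_def)
      then have "in_degree E v > 0"
        using finite_predecessors[OF \<open>finite E\<close>] by (simp add: in_degree_def card_gt_0_iff)
      have "(\<Sum>y \<in> ?I. \<Sum>ps \<in> dpaths E y v. path_weight E ps)
          = (\<Sum>y \<in> ?I. (\<Sum>u \<in> ?P. \<Sum>ps \<in> dpaths E y u. path_weight E ps) / real (in_degree E v))"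
        by (intro sum.cong refl sum_path_weight_snoc[OF \<open>finite E\<close> assms(3)]) (use False in auto)
      also have "\<dots> = (\<Sum>y \<in> ?I. \<Sum>u \<in> ?P. \<Sum>ps \<in> dpaths E y u. path_weight E ps) / real (in_degree E v)"
        by (simp add: sum_divide_distrib)
      also have "\<dots> = (\<Sum>u \<in> ?P. \<Sum>y \<in> ?I. \<Sum>ps \<in> dpaths E y u. path_weight E ps) / real (in_degree E v)"
        by (subst sum.swap) (rule refl)
      also have "\<dots> = real (card ?P) / real (in_degree E v)"
      proof -
        have "(\<Sum>y \<in> ?I. \<Sum>ps \<in> dpaths E y u. path_weight E ps) = 1" if "u \<in> ?P" for u
          using less.IH that assms(2) by blast
        then show ?thesis by simp
      qed
      also have "\<dots> = 1"
        using \<open>in_degree E v > 0\<close> by (simp add: in_degree_def)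
      finally show ?thesis .
    qed
  qed
qed

theorem lemma3:
  fixes V :: "'a set" and E :: "('a \<times> 'a) set" and t x :: 'a and d :: nat
  assumes "finite V"
    and "E \<subseteq> V \<times> V"
    and "acyclic E"
    and "d = card (input_nodes V E)"
    and "is_leaf V E t"
    and sym: "\<forall>y \<in> input_nodes V E. \<forall>z \<in> input_nodes V E. path_degrees E y t = path_degrees E z t"
    and "x \<in> input_nodes V E"
  shows "(\<Sum>ps \<in> dpaths E x t. \<Prod>p \<leftarrow> tl ps. 1 / real (in_degree E p)) = 1 / real d"
proof -
  define S where "S y = (\<Sum>ps \<in> dpaths E y t. path_weight E ps)" for y
  have "t \<in> V" using \<open>is_leaf V E t\<close> by (simp add: is_leaf_def)
  then have "1 = (\<Sum>y \<in> input_nodes V E. S y)"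
    using sum_inputs_path_weight_eq_1[OF assms(1-3)] by (simp add: S_def)
  also have "\<dots> = (\<Sum>y \<in> input_nodes V E. S x)"
  proof (rule sum.cong[OF refl])
    fix y assume "y \<in> input_nodes V E"
    then show "S y = S x"
      unfolding S_def sum_path_weight_eq_path_degrees
      using sym \<open>x \<in> input_nodes V E\<close> by metis
  qed
  finally have "real d * S x = 1" using assms(4) by simp
  then have "S x = 1 / real d" by (metis mult.commute nonzero_eq_divide_eq mult_zero_left zero_neq_one)
  then show ?thesis by (simp add: S_def path_weight_def)
qed

end
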